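(* Let $\mu>0$, $\tau>0$, and real numbers $\theta_0,u_0,\theta^\ast$ with $\theta_0\neq u_0$ satisfying $\mu\tau=\dfrac{\theta^\ast-\theta_0}{\theta_0-u_0}$. Consider the system $$\dot u=-\mu(u-\theta),\qquad \dot\theta=-\eta(t)\,(u-\theta^\ast),\qquad u(0)=u_0,\ \theta(0)=\theta_0,$$ on $[0,\tau]$ with the learning rate schedule $\eta(t)=\dfrac{1}{\tau-t+1/\mu}$. Then, with $m=\mu(\theta_0-u_0)$, the solution is $u(t)=u_0+mt$ and $\theta(t)=\frac{m}{\mu}+u_0+mt$ for $t\in[0,\tau]$; in particular $\ddot u\equiv 0$ (the sample centre of mass moves at constant speed) and $\theta(\tau)=\theta^\ast$.
   Context: This is the harmonic trap energy-based model: energy $E(x,\theta)=\frac12(x-\theta)^2$ on $\mathbb{R}$, model distribution Gaussian with mean $\theta$ and variance $\beta^{-1}$, data distribution Gaussian with mean $\theta^\ast$. Here $u(t)$ is the mean of the sample distribution evolving under overdamped Langevin dynamics with mobility $\mu$, and $\theta(t)$ is updated by the approximate maximum-likelihood gradient flow with time-dependent learning rate $\eta(t)$. The excess work of the process is $\int_0^\tau(\theta-u)\dot\theta\,dt=\frac12(\dot u/\mu)^2\big|_0^\tau+\frac1\mu\int_0^\tau\dot u^2\,dt$, whose integral part is minimized by $\ddot u=0$. *)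

theory Defs
  imports "HOL-Analysis.Analysis"
begin

end

theory Submission
  imports Defs
begin

text \<open>With \<open>m = \<mu>(\<theta>0 - u0)\<close>, the constraint on \<open>\<mu>\<tau>\<close> says
  \<open>u0 + m t - \<theta>* = -m (\<tau> - t + 1/\<mu>)\<close>, which is exactly the factor the schedule \<open>\<eta>\<close>
  divides out, so the affine pair solves the system. For uniqueness, the right-hand side is
  Lipschitz in \<open>(u, \<theta>)\<close> with constant \<open>\<mu>\<close> because \<open>0 \<le> \<eta> \<le> \<mu>\<close> on \<open>[0, \<tau>]\<close>; hence the
  squared distance \<open>V\<close> of two solutions satisfies \<open>V' \<le> 4\<mu> V\<close> and \<open>V 0 = 0\<close>, and
  Gronwall gives \<open>V = 0\<close>.\<close>

lemma gronwall_zero: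
  fixes V V' :: "real \<Rightarrow> real" and C T t :: real
  assumes V0: "V 0 = 0" and nonneg: "V t \<ge> 0" and t: "t \<in> {0..T}"
    and deriv: "\<And>s. s \<in> {0..T} \<Longrightarrow> (V has_real_derivative V' s) (at s within {0..T})"
    and bound: "\<And>s. s \<in> {0..T} \<Longrightarrow> V' s \<le> C * V s"
  shows "V t = 0"
proof -
  define W where "W s = exp (- (C * s)) * V s" for s
  have W_deriv: "(W has_real_derivative exp (- (C * s)) * (V' s - C * V s)) (at s within {0..T})"
    if "s \<in> {0..T}" for s
    unfolding W_def[abs_def] using deriv[OF that]
    by (auto intro!: derivative_eq_intros simp: algebra_simps)
  have "W t \<le> W 0"
  proof (rule DERIV_nonpos_imp_decreasing_open[of 0 t W])
    show "0 \<le> t" using t by simp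
    show "continuous_on {0..t} W"
      using DERIV_continuous_on[OF W_deriv] t by (auto intro: continuous_on_subset)
    fix s assume s: "0 < s" "s < t"
    then have "s \<in> {0..T}" "at s within {0..T} = at s"
      using t by (auto intro: at_within_Icc_at)
    moreover have "exp (- (C * s)) * (V' s - C * V s) \<le> 0"
      using bound[of s] \<open>s \<in> {0..T}\<close> by (simp add: mult_nonneg_nonpos)
    ultimately show "\<exists>y. DERIV W s :> y \<and> y \<le> 0"
      using W_deriv by metis
  qed
  then have "V t \<le> 0" using V0 by (simp add: W_def mult_le_0_iff)
  with nonneg show ?thesis by simp
qed

lemma mult_le_abs_mult_bound:
  fixes a b c :: "'a::linordered_idom"
  assumes "\<bar>b\<bar> \<le> c"
  shows "a * b \<le> \<bar>a\<bar> * c"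
proof -
  have "a * b \<le> \<bar>a\<bar> * \<bar>b\<bar>"
    by (metis abs_ge_self abs_mult)
  also have "\<dots> \<le> \<bar>a\<bar> * c"
    using assms by (rule mult_left_mono) simp
  finally show ?thesis .
qed

lemma planar_ode_unique:
  fixes F G :: "real \<Rightarrow> real \<Rightarrow> real \<Rightarrow> real" and x y x' y' :: "real \<Rightarrow> real" and L T t :: real
  assumes lipschitz_F: "\<And>s a b a' b'. s \<in> {0..T} \<Longrightarrow> \<bar>F s a b - F s a' b'\<bar> \<le> L * (\<bar>a - a'\<bar> + \<bar>b - b'\<bar>)"
    and lipschitz_G: "\<And>s a b a' b'. s \<in> {0..T} \<Longrightarrow> \<bar>G s a b - G s a' b'\<bar> \<le> L * (\<bar>a - a'\<bar> + \<bar>b - b'\<bar>)"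
    and solves: "\<And>s. s \<in> {0..T} \<Longrightarrow>
      (x has_real_derivative F s (x s) (y s)) (at s within {0..T}) \<and>
      (y has_real_derivative G s (x s) (y s)) (at s within {0..T})"
    and solves': "\<And>s. s \<in> {0..T} \<Longrightarrow>
      (x' has_real_derivative F s (x' s) (y' s)) (at s within {0..T}) \<and>
      (y' has_real_derivative G s (x' s) (y' s)) (at s within {0..T})"
    and init: "x 0 = x' 0" "y 0 = y' 0"
    and t: "t \<in> {0..T}"
  shows "x t = x' t \<and> y t = y' t"
proof -
  define dx where "dx s = x s - x' s" for s
  define dy where "dy s = y s - y' s" for s
  define dF where "dF s = F s (x s) (y s) - F s (x' s) (y' s)" for s
  define dG where "dG s = G s (x s) (y s) - G s (x' s) (y' s)" for s
  define V where "V s = (dx s)\<^sup>2 + (dy s)\<^sup>2" for s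
  have L_nonneg: "L \<ge> 0"
    using lipschitz_F[OF t, of 1 0 0 0] by simp
  have V_deriv: "(V has_real_derivative 2 * dx s * dF s + 2 * dy s * dG s) (at s within {0..T})"
    if "s \<in> {0..T}" for s
  proof -
    have dx_deriv: "(dx has_real_derivative dF s) (at s within {0..T})"
      unfolding dx_def[abs_def] dF_def using solves[OF that] solves'[OF that] by (intro DERIV_diff) auto
    have dy_deriv: "(dy has_real_derivative dG s) (at s within {0..T})"
      unfolding dy_def[abs_def] dG_def using solves[OF that] solves'[OF that] by (intro DERIV_diff) auto
    show ?thesis
      using DERIV_add[OF DERIV_power[OF dx_deriv, of 2] DERIV_power[OF dy_deriv, of 2]]
      unfolding V_def[abs_def] by (simp add: algebra_simps)
  qed
  have V_bound: "2 * dx s * dF s + 2 * dy s * dG s \<le> 4 * L * V s" if "s \<in> {0..T}" for s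
  proof -
    let ?r = "\<bar>dx s\<bar> + \<bar>dy s\<bar>"
    have "dx s * dF s \<le> \<bar>dx s\<bar> * (L * ?r)"
      using lipschitz_F[OF that] unfolding dF_def dx_def dy_def by (rule mult_le_abs_mult_bound)
    moreover have "dy s * dG s \<le> \<bar>dy s\<bar> * (L * ?r)"
      using lipschitz_G[OF that] unfolding dG_def dx_def dy_def by (rule mult_le_abs_mult_bound)
    moreover have "\<bar>dx s\<bar> * (L * ?r) + \<bar>dy s\<bar> * (L * ?r) = L * ?r\<^sup>2"
      by (simp add: power2_eq_square algebra_simps)
    moreover have "?r\<^sup>2 \<le> 2 * V s"
      using sum_squares_bound[of "\<bar>dx s\<bar>" "\<bar>dy s\<bar>"] unfolding V_def power2_sum by simp
    ultimately show ?thesis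
      using mult_left_mono[OF \<open>?r\<^sup>2 \<le> 2 * V s\<close> L_nonneg] by linarith
  qed
  have "V t = 0"
    by (rule gronwall_zero[OF _ _ t V_deriv V_bound]) (simp_all add: V_def dx_def dy_def init)
  then show ?thesis
    by (simp add: V_def dx_def dy_def add_nonneg_eq_0_iff)
qed

lemma abs_relaxation_diff_le:
  fixes k a b a' b' :: real
  assumes "k \<ge> 0"
  shows "\<bar>- k * (a - b) - - k * (a' - b')\<bar> \<le> k * (\<bar>a - a'\<bar> + \<bar>b - b'\<bar>)"
proof -
  have "\<bar>- k * (a - b) - - k * (a' - b')\<bar> = \<bar>- k * ((a - a') - (b - b'))\<bar>"
    by (rule arg_cong[where f = abs]) (simp add: algebra_simps)
  also have "\<dots> = k * \<bar>(a - a') - (b - b')\<bar>"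
    using assms by (simp add: abs_mult)
  also have "\<dots> \<le> k * (\<bar>a - a'\<bar> + \<bar>b - b'\<bar>)"
    using assms by (intro mult_left_mono abs_triangle_ineq4)
  finally show ?thesis .
qed

lemma abs_scaled_diff_le:
  fixes c k a a' b b' z :: real
  assumes "0 \<le> c" "c \<le> k"
  shows "\<bar>- c * (a - z) - - c * (a' - z)\<bar> \<le> k * (\<bar>a - a'\<bar> + \<bar>b - b'\<bar>)"
proof -
  have "\<bar>- c * (a - z) - - c * (a' - z)\<bar> = \<bar>- c * (a - a')\<bar>"
    by (rule arg_cong[where f = abs]) (simp add: algebra_simps)
  also have "\<dots> = c * \<bar>a - a'\<bar>"
    using assms(1) by (simp add: abs_mult)
  also have "\<dots> \<le> k * (\<bar>a - a'\<bar> + \<bar>b - b'\<bar>)"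
    using assms by (intro mult_mono) auto
  finally show ?thesis .
qed

lemma trap_dynamics_unique:
  fixes \<eta> u \<theta> u' \<theta>' :: "real \<Rightarrow> real" and \<mu> \<theta>s T t :: real
  assumes "\<mu> \<ge> 0" and \<eta>_bounds: "\<And>s. s \<in> {0..T} \<Longrightarrow> 0 \<le> \<eta> s \<and> \<eta> s \<le> \<mu>"
    and solves: "\<And>s. s \<in> {0..T} \<Longrightarrow>
      (u has_real_derivative - \<mu> * (u s - \<theta> s)) (at s within {0..T}) \<and>
      (\<theta> has_real_derivative - \<eta> s * (u s - \<theta>s)) (at s within {0..T})"
    and solves': "\<And>s. s \<in> {0..T} \<Longrightarrow>
      (u' has_real_derivative - \<mu> * (u' s - \<theta>' s)) (at s within {0..T}) \<and>
      (\<theta>' has_real_derivative - \<eta> s * (u' s - \<theta>s)) (at s within {0..T})"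
    and init: "u 0 = u' 0" "\<theta> 0 = \<theta>' 0" and t: "t \<in> {0..T}"
  shows "u t = u' t \<and> \<theta> t = \<theta>' t"
proof (rule planar_ode_unique[where F = "\<lambda>s a b. - \<mu> * (a - b)" and G = "\<lambda>s a b. - \<eta> s * (a - \<theta>s)"
      and L = \<mu> and x = u and y = \<theta> and x' = u' and y' = \<theta>',
      OF abs_relaxation_diff_le[OF \<open>\<mu> \<ge> 0\<close>] abs_scaled_diff_le])
  show "0 \<le> \<eta> s" "\<eta> s \<le> \<mu>" if "s \<in> {0..T}" for s
    using \<eta>_bounds[OF that] by simp_all
qed (use solves solves' init t in simp_all)

lemma learning_rate_bounds:
  fixes \<mu> \<tau> t :: real
  assumes "\<mu> > 0" and "t \<le> \<tau>"
  shows "0 < 1 / (\<tau> - t + 1 / \<mu>)" and "1 / (\<tau> - t + 1 / \<mu>) \<le> \<mu>"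
proof -
  have "0 < 1 / \<mu>" "1 / \<mu> \<le> \<tau> - t + 1 / \<mu>"
    using assms by auto
  then have "0 < \<tau> - t + 1 / \<mu>"
    by linarith
  then show "0 < 1 / (\<tau> - t + 1 / \<mu>)"
    by simp
  from \<open>0 < 1 / \<mu>\<close> \<open>1 / \<mu> \<le> \<tau> - t + 1 / \<mu>\<close> have "1 / (\<tau> - t + 1 / \<mu>) \<le> 1 / (1 / \<mu>)"
    by (intro frac_le) auto
  then show "1 / (\<tau> - t + 1 / \<mu>) \<le> \<mu>"
    by simp
qed

lemma learning_rate_drift_eq:
  fixes \<mu> \<tau> \<theta>0 u0 \<theta>s t :: real
  assumes "\<mu> > 0" and "\<theta>0 \<noteq> u0" and "\<mu> * \<tau> = (\<theta>s - \<theta>0) / (\<theta>0 - u0)" and "t \<le> \<tau>"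
  shows "- (1 / (\<tau> - t + 1 / \<mu>)) * ((u0 + \<mu> * (\<theta>0 - u0) * t) - \<theta>s) = \<mu> * (\<theta>0 - u0)"
proof -
  have "(u0 + \<mu> * (\<theta>0 - u0) * t) - \<theta>s = - \<mu> * (\<theta>0 - u0) * (\<tau> - t + 1 / \<mu>)"
    using assms(1-3) by (simp add: field_simps)
  moreover have "\<tau> - t + 1 / \<mu> > 0"
    using assms(1,4) by (intro add_nonneg_pos) auto
  ultimately show ?thesis
    by simp
qed

theorem mainTheorem2:
  fixes \<mu> \<tau> \<theta>0 u0 \<theta>s :: real
  assumes "\<mu> > 0" and "\<tau> > 0" and "\<theta>0 \<noteq> u0"
    and "\<mu> * \<tau> = (\<theta>s - \<theta>0) / (\<theta>0 - u0)"
  defines "\<eta> \<equiv> (\<lambda>t. 1 / (\<tau> - t + 1 / \<mu>))"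
    and "m \<equiv> \<mu> * (\<theta>0 - u0)"
  shows "(\<forall>t\<in>{0..\<tau>}.
            ((\<lambda>t. u0 + m * t) has_real_derivative
               - \<mu> * ((u0 + m * t) - (m / \<mu> + u0 + m * t))) (at t within {0..\<tau>})
          \<and> ((\<lambda>t. m / \<mu> + u0 + m * t) has_real_derivative
               - \<eta> t * ((u0 + m * t) - \<theta>s)) (at t within {0..\<tau>}))
       \<and> (\<forall>u \<theta> :: real \<Rightarrow> real.
            u 0 = u0 \<and> \<theta> 0 = \<theta>0 \<and>
            (\<forall>t\<in>{0..\<tau>}.
               (u has_real_derivative - \<mu> * (u t - \<theta> t)) (at t within {0..\<tau>})
             \<and> (\<theta> has_real_derivative - \<eta> t * (u t - \<theta>s)) (at t within {0..\<tau>}))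
            \<longrightarrow> (\<forall>t\<in>{0..\<tau>}. u t = u0 + m * t \<and> \<theta> t = m / \<mu> + u0 + m * t
                   \<and> (u has_real_derivative m) (at t within {0..\<tau>}))
              \<and> \<theta> \<tau> = \<theta>s)"
proof -
  have \<eta>_bounds: "0 \<le> \<eta> t \<and> \<eta> t \<le> \<mu>" if "t \<in> {0..\<tau>}" for t
    using learning_rate_bounds[OF \<open>\<mu> > 0\<close>, of t \<tau>] that by (simp add: \<eta>_def)
  have drift: "- \<eta> t * ((u0 + m * t) - \<theta>s) = m" if "t \<in> {0..\<tau>}" for t
    using learning_rate_drift_eq[OF assms(1,3,4), of t] that by (simp add: \<eta>_def m_def)
  have explicit: "\<forall>t\<in>{0..\<tau>}.
            ((\<lambda>t. u0 + m * t) has_real_derivative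
               - \<mu> * ((u0 + m * t) - (m / \<mu> + u0 + m * t))) (at t within {0..\<tau>})
          \<and> ((\<lambda>t. m / \<mu> + u0 + m * t) has_real_derivative
               - \<eta> t * ((u0 + m * t) - \<theta>s)) (at t within {0..\<tau>})"
    using drift \<open>\<mu> > 0\<close> by (auto intro!: derivative_eq_intros)
  show ?thesis
  proof (intro conjI allI impI explicit)
    fix u \<theta> :: "real \<Rightarrow> real"
    assume solves: "u 0 = u0 \<and> \<theta> 0 = \<theta>0 \<and>
            (\<forall>t\<in>{0..\<tau>}.
               (u has_real_derivative - \<mu> * (u t - \<theta> t)) (at t within {0..\<tau>})
             \<and> (\<theta> has_real_derivative - \<eta> t * (u t - \<theta>s)) (at t within {0..\<tau>}))"
    have closed_form: "u t = u0 + m * t \<and> \<theta> t = m / \<mu> + u0 + m * t" if "t \<in> {0..\<tau>}" for t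
      by (rule trap_dynamics_unique[where u' = "\<lambda>t. u0 + m * t" and \<theta>' = "\<lambda>t. m / \<mu> + u0 + m * t"
            and \<theta>s = \<theta>s, OF _ \<eta>_bounds _ _ _ _ that])
        (use solves explicit \<open>\<mu> > 0\<close> in \<open>blast | simp add: m_def\<close>)+
    show "\<forall>t\<in>{0..\<tau>}. u t = u0 + m * t \<and> \<theta> t = m / \<mu> + u0 + m * t
                   \<and> (u has_real_derivative m) (at t within {0..\<tau>})"
    proof
      fix t assume "t \<in> {0..\<tau>}"
      moreover have "- \<mu> * (u t - \<theta> t) = m"
        using closed_form[OF \<open>t \<in> {0..\<tau>}\<close>] \<open>\<mu> > 0\<close> by simp
      ultimately show "u t = u0 + m * t \<and> \<theta> t = m / \<mu> + u0 + m * t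
                   \<and> (u has_real_derivative m) (at t within {0..\<tau>})"
        using closed_form solves by metis
    qed
    have "\<theta>s = m / \<mu> + u0 + m * \<tau>"
      using drift[of \<tau>] \<open>\<tau> > 0\<close> \<open>\<mu> > 0\<close> by (simp add: \<eta>_def field_simps)
    then show "\<theta> \<tau> = \<theta>s"
      using closed_form[of \<tau>] \<open>\<tau> > 0\<close> by simp
  qed
qed

end
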